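(* Let $d\ge1$, $M := e_1e_2^\top + e_2e_1^\top$, $q_{\mathrm{pop}}(w) := w^\top Mw$, $u_\pm := (e_1\pm e_2)/\sqrt2$ and $P_{12} := u_+u_+^\top+u_-u_-^\top$. Let $w_0$ and $w_{T_\star}$ be unit vectors in $\mathbb{R}^d$ such that \[ |q_{\mathrm{pop}}(w_0)|\ge\frac{3}{4d},\qquad \|P_{12}w_0\|_2\le\frac1{\sqrt d},\qquad \|w_{T_\star} - w_0\|_2\le\frac{1}{4\sqrt d}. \] Then $\mathrm{sign}(q_{\mathrm{pop}}(w_{T_\star})) = \mathrm{sign}(q_{\mathrm{pop}}(w_0))$. Moreover, if $s := \mathrm{sign}(q_{\mathrm{pop}}(w_0))$ and $u_s := (e_1 + s e_2)/\sqrt2$, then \[ |\langle w_{T_\star},u_s\rangle| \ge \Big(\frac{\sqrt3}{2}-\frac14\Big)\frac{1}{\sqrt d} \ge \frac{1}{2\sqrt d}. \]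
   Context: In the paper, $w_0$ is the initial inner weight and $w_{T_\star}$ the inner weight at the end of Phase 1; only the stated deterministic conditions are used. *)

theory Defs
  imports "HOL-Analysis.Analysis"
begin

text \<open>Coordinates i1, i2 play the roles of e_1, e_2 (distinct indices of the finite index type).\<close>

definition Mpop :: "'n::finite \<Rightarrow> 'n \<Rightarrow> real^'n^'n" where
  "Mpop i1 i2 = (\<chi> i j. if (i = i1 \<and> j = i2) \<or> (i = i2 \<and> j = i1) then 1 else 0)"

definition qpop :: "'n::finite \<Rightarrow> 'n \<Rightarrow> real^'n \<Rightarrow> real" where
  "qpop i1 i2 w = w \<bullet> (Mpop i1 i2 *v w)"

definition uvec :: "'n::finite \<Rightarrow> 'n \<Rightarrow> real \<Rightarrow> real^'n" where
  "uvec i1 i2 s = (1 / sqrt 2) *\<^sub>R (axis i1 1 + s *\<^sub>R axis i2 1)"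

definition P12 :: "'n::finite \<Rightarrow> 'n \<Rightarrow> real^'n \<Rightarrow> real^'n" where
  "P12 i1 i2 w = (uvec i1 i2 1 \<bullet> w) *\<^sub>R uvec i1 i2 1 + (uvec i1 i2 (-1) \<bullet> w) *\<^sub>R uvec i1 i2 (-1)"

end

theory Submission
  imports Defs
begin

text \<open>In the orthonormal coordinates \<open>p = \<langle>w, u\<^sub>s\<rangle>\<close>, \<open>m = \<langle>w, u\<^sub>-\<^sub>s\<rangle>\<close> of the \<open>e\<^sub>1e\<^sub>2\<close>-plane,
  with \<open>s\<close> the sign of \<open>q\<^sub>p\<^sub>o\<^sub>p(w\<^sub>0)\<close>, one has \<open>s q\<^sub>p\<^sub>o\<^sub>p(w) = p\<^sup>2 - m\<^sup>2\<close> and \<open>\<parallel>P\<^sub>1\<^sub>2 w\<parallel>\<^sup>2 = p\<^sup>2 + m\<^sup>2\<close>.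
  With \<open>e = 1/\<surd>d\<close> the hypotheses on \<open>w\<^sub>0\<close> give \<open>|p| \<ge> (\<surd>3/2) e\<close> and \<open>m\<^sup>2 \<le> e\<^sup>2/8\<close>, and the
  move to \<open>w\<^sub>T\<close> shifts \<open>(p, m)\<close> by a vector of length at most \<open>e/4\<close>. Since
  \<open>e/(2\<surd>2) + \<surd>2 e/4 = e/\<surd>2 < (\<surd>3/2) e\<close>, the coordinate \<open>p\<close> stays strictly dominant, so
  the sign of \<open>q\<^sub>p\<^sub>o\<^sub>p\<close> is preserved, and \<open>|p|\<close> drops by at most \<open>e/4\<close>.\<close>

lemma dominant_coordinate_perturb:
  fixes p m p' m' e :: real
  assumes "e > 0" and "p\<^sup>2 + m\<^sup>2 \<le> e\<^sup>2" and "p\<^sup>2 - m\<^sup>2 \<ge> 3/4 * e\<^sup>2"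
    and "(p' - p)\<^sup>2 + (m' - m)\<^sup>2 \<le> (e/4)\<^sup>2"
  shows "m'\<^sup>2 < p'\<^sup>2" and "(sqrt 3 / 2 - 1/4) * e \<le> \<bar>p'\<bar>"
proof -
  define dp where "dp = \<bar>p' - p\<bar>"
  define dm where "dm = \<bar>m' - m\<bar>"
  have sq_add_le: "(a + b)\<^sup>2 \<le> 2 * (a\<^sup>2 + b\<^sup>2)" for a b :: real
    using zero_le_power2[of "a - b"] by (simp add: power2_eq_square algebra_simps)
  have shift: "dp\<^sup>2 + dm\<^sup>2 \<le> (e/4)\<^sup>2"
    using assms(4) by (simp add: dp_def dm_def)
  have "dp\<^sup>2 \<le> (e/4)\<^sup>2"
    using shift zero_le_power2[of dm] by linarith
  then have "dp \<le> e/4"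
    by (rule power2_le_imp_le) (use assms(1) in simp)
  have p_large: "sqrt 3 / 2 * e \<le> \<bar>p\<bar>"
  proof -
    have "sqrt 3 / 2 * e = sqrt (3/4 * e\<^sup>2)"
      using assms(1) by (simp add: real_sqrt_mult real_sqrt_divide)
    also have "\<dots> \<le> sqrt (p\<^sup>2)"
      using assms(3) zero_le_power2[of m] by (intro real_sqrt_le_mono) linarith
    finally show ?thesis by simp
  qed
  have "(\<bar>m\<bar> + (dp + dm))\<^sup>2 \<le> 2 * (m\<^sup>2 + (dp + dm)\<^sup>2)"
    using sq_add_le[of "\<bar>m\<bar>"] by simp
  also have "\<dots> \<le> 2 * (m\<^sup>2 + 2 * (dp\<^sup>2 + dm\<^sup>2))"
    using sq_add_le[of dp dm] by simp
  also have "\<dots> \<le> e\<^sup>2 / 2"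
    using assms(2,3) shift by (simp add: power_divide)
  also have "\<dots> < p\<^sup>2"
    using assms(3) zero_le_power2[of m] zero_less_power[OF assms(1), of 2] by linarith
  finally have "(\<bar>m\<bar> + (dp + dm))\<^sup>2 < \<bar>p\<bar>\<^sup>2"
    by simp
  then have "\<bar>m\<bar> + (dp + dm) < \<bar>p\<bar>"
    by (rule power2_less_imp_less) simp
  moreover have "\<bar>p\<bar> - dp \<le> \<bar>p'\<bar>" and "\<bar>m'\<bar> \<le> \<bar>m\<bar> + dm"
    by (auto simp: dp_def dm_def)
  ultimately have "\<bar>m'\<bar> < \<bar>p'\<bar>" by linarith
  then show "m'\<^sup>2 < p'\<^sup>2"
    by (metis abs_ge_zero power2_abs power_strict_mono zero_less_numeral)
  show "(sqrt 3 / 2 - 1/4) * e \<le> \<bar>p'\<bar>"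
    using p_large \<open>dp \<le> e/4\<close> \<open>\<bar>p\<bar> - dp \<le> \<bar>p'\<bar>\<close> by (simp add: algebra_simps)
qed

lemma Mpop_mult_vec:
  assumes "i1 \<noteq> i2"
  shows "Mpop i1 i2 *v w = w$i2 *\<^sub>R axis i1 1 + w$i1 *\<^sub>R axis i2 1"
  using assms
  by (auto simp: vec_eq_iff matrix_vector_mult_def Mpop_def axis_def
      if_distrib[of "\<lambda>x. x * _"] cong: if_cong)

lemma qpop_eq:
  assumes "i1 \<noteq> i2"
  shows "qpop i1 i2 w = 2 * w$i1 * w$i2"
  using assms by (simp add: qpop_def Mpop_mult_vec inner_add_right inner_axis)

lemma inner_uvec:
  "w \<bullet> uvec i1 i2 s = (w$i1 + s * w$i2) / sqrt 2"
  by (simp add: uvec_def inner_add_right inner_axis algebra_simps add_divide_distrib)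

lemma qpop_eq_inner_uvec:
  assumes "i1 \<noteq> i2"
  shows "s * qpop i1 i2 w = (w \<bullet> uvec i1 i2 s)\<^sup>2 - (w \<bullet> uvec i1 i2 (- s))\<^sup>2"
  using assms by (simp add: qpop_eq inner_uvec power2_eq_square field_simps)

lemma inner_uvec_sq_add:
  assumes "\<bar>s\<bar> = 1"
  shows "(w \<bullet> uvec i1 i2 s)\<^sup>2 + (w \<bullet> uvec i1 i2 (- s))\<^sup>2 = (w$i1)\<^sup>2 + (w$i2)\<^sup>2"
proof -
  have "(w \<bullet> uvec i1 i2 s)\<^sup>2 + (w \<bullet> uvec i1 i2 (- s))\<^sup>2 = (w$i1)\<^sup>2 + s\<^sup>2 * (w$i2)\<^sup>2"
    by (simp add: inner_uvec power2_eq_square field_simps)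
  also have "s\<^sup>2 = 1"
    using assms by (metis one_power2 power2_abs)
  finally show ?thesis by simp
qed

lemma P12_eq:
  assumes "i1 \<noteq> i2"
  shows "P12 i1 i2 w = w$i1 *\<^sub>R axis i1 1 + w$i2 *\<^sub>R axis i2 1"
proof -
  have uvec_inner: "uvec i1 i2 s \<bullet> w = (w$i1 + s * w$i2) / sqrt 2" for s
    by (simp add: inner_commute inner_uvec)
  show ?thesis
    unfolding P12_def uvec_inner
    using assms by (auto simp: vec_eq_iff uvec_def axis_def field_simps)
qed

lemma norm_P12_sq:
  assumes "i1 \<noteq> i2"
  shows "(norm (P12 i1 i2 w))\<^sup>2 = (w$i1)\<^sup>2 + (w$i2)\<^sup>2"
  unfolding P12_eq[OF assms] power2_norm_eq_inner
  using assms by (simp add: inner_add_left inner_add_right inner_axis_axis power2_eq_square)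

lemma vec_nth_sq_add_le_norm_sq:
  fixes v :: "real^'n"
  assumes "i1 \<noteq> i2"
  shows "(v$i1)\<^sup>2 + (v$i2)\<^sup>2 \<le> (norm v)\<^sup>2"
proof -
  have "(v$i1)\<^sup>2 + (v$i2)\<^sup>2 = (\<Sum>i\<in>{i1, i2}. (v$i)\<^sup>2)"
    using assms by simp
  also have "\<dots> \<le> (\<Sum>i\<in>UNIV. (v$i)\<^sup>2)"
    by (rule sum_mono2) auto
  also have "\<dots> = (norm v)\<^sup>2"
    unfolding power2_norm_eq_inner inner_vec_def by (simp add: power2_eq_square)
  finally show ?thesis .
qed

lemma sgn_qpop_perturb:
  fixes w0 wT :: "real^'n"
  assumes "i1 \<noteq> i2" and "e > 0"
    and "\<bar>qpop i1 i2 w0\<bar> \<ge> 3/4 * e\<^sup>2"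
    and "norm (P12 i1 i2 w0) \<le> e"
    and "norm (wT - w0) \<le> e/4"
  shows "sgn (qpop i1 i2 wT) = sgn (qpop i1 i2 w0)"
    and "(sqrt 3 / 2 - 1/4) * e \<le> \<bar>wT \<bullet> uvec i1 i2 (sgn (qpop i1 i2 w0))\<bar>"
proof -
  define s where "s = sgn (qpop i1 i2 w0)"
  define p0 m0 pT mT where "p0 = w0 \<bullet> uvec i1 i2 s" and "m0 = w0 \<bullet> uvec i1 i2 (- s)"
    and "pT = wT \<bullet> uvec i1 i2 s" and "mT = wT \<bullet> uvec i1 i2 (- s)"
  have "qpop i1 i2 w0 \<noteq> 0"
    using assms(2,3) by auto
  then have "\<bar>s\<bar> = 1" and "s * qpop i1 i2 w0 = \<bar>qpop i1 i2 w0\<bar>"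
    by (auto simp: s_def sgn_if)
  have "p0\<^sup>2 + m0\<^sup>2 \<le> e\<^sup>2"
    using norm_P12_sq[OF assms(1), of w0] inner_uvec_sq_add[OF \<open>\<bar>s\<bar> = 1\<close>, of w0 i1 i2]
      power_mono[OF assms(4) norm_ge_zero, of 2]
    by (simp add: p0_def m0_def)
  moreover have "p0\<^sup>2 - m0\<^sup>2 \<ge> 3/4 * e\<^sup>2"
    using qpop_eq_inner_uvec[OF assms(1), of s w0] \<open>s * qpop i1 i2 w0 = \<bar>qpop i1 i2 w0\<bar>\<close> assms(3)
    by (simp add: p0_def m0_def)
  moreover have "(pT - p0)\<^sup>2 + (mT - m0)\<^sup>2 \<le> (e/4)\<^sup>2"
    using inner_uvec_sq_add[OF \<open>\<bar>s\<bar> = 1\<close>, of "wT - w0" i1 i2]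
      vec_nth_sq_add_le_norm_sq[OF assms(1), of "wT - w0"] power_mono[OF assms(5) norm_ge_zero, of 2]
    by (simp add: p0_def m0_def pT_def mT_def inner_diff_left)
  ultimately have "mT\<^sup>2 < pT\<^sup>2" and "(sqrt 3 / 2 - 1/4) * e \<le> \<bar>pT\<bar>"
    using dominant_coordinate_perturb[OF assms(2)] by blast+
  then show "(sqrt 3 / 2 - 1/4) * e \<le> \<bar>wT \<bullet> uvec i1 i2 (sgn (qpop i1 i2 w0))\<bar>"
    by (simp add: pT_def s_def)
  have "0 < s * qpop i1 i2 wT"
    using qpop_eq_inner_uvec[OF assms(1), of s wT] \<open>mT\<^sup>2 < pT\<^sup>2\<close> by (simp add: pT_def mT_def)
  then show "sgn (qpop i1 i2 wT) = sgn (qpop i1 i2 w0)"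
    using \<open>\<bar>s\<bar> = 1\<close> by (auto simp: s_def sgn_if zero_less_mult_iff abs_if split: if_splits)
qed

theorem lemma15:
  fixes w0 wT :: "real^'n" and i1 i2 :: 'n
  defines "d \<equiv> real CARD('n)"
  assumes "i1 \<noteq> i2"
    and "norm w0 = 1" and "norm wT = 1"
    and "\<bar>qpop i1 i2 w0\<bar> \<ge> 3 / (4 * d)"
    and "norm (P12 i1 i2 w0) \<le> 1 / sqrt d"
    and "norm (wT - w0) \<le> 1 / (4 * sqrt d)"
  shows "sgn (qpop i1 i2 wT) = sgn (qpop i1 i2 w0)
     \<and> \<bar>wT \<bullet> uvec i1 i2 (sgn (qpop i1 i2 w0))\<bar> \<ge> (sqrt 3 / 2 - 1 / 4) * (1 / sqrt d)
     \<and> (sqrt 3 / 2 - 1 / 4) * (1 / sqrt d) \<ge> 1 / (2 * sqrt d)"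
proof -
  have "d > 0" by (simp add: d_def)
  then have "\<bar>qpop i1 i2 w0\<bar> \<ge> 3/4 * (1 / sqrt d)\<^sup>2" and "norm (wT - w0) \<le> 1 / sqrt d / 4"
    using assms(5,7) by (simp_all add: power_divide mult.commute)
  note perturb = sgn_qpop_perturb[OF assms(2) _ this(1) assms(6) this(2)]
  have "1/2 \<le> sqrt 3 / 2 - 1/4"
    using real_sqrt_le_mono[of "9/4" 3] by (simp add: real_sqrt_divide)
  then have "1/2 / sqrt d \<le> (sqrt 3 / 2 - 1 / 4) / sqrt d"
    by (rule divide_right_mono) (use \<open>d > 0\<close> in simp)
  then show ?thesis
    using perturb \<open>d > 0\<close> by simp
qed

end
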